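(* Let $V$ be a finite-dimensional $S_{n+1}$-invariant subspace of the space of $k$-forms on $T^n$, and let $W_d$ ($0\le d\le n$) be $S_{n+1}$-invariant subspaces with $V_d=W_d\oplus V_{d+1}$. Then the geometric decomposition map $\mathcal D:V\to\bigoplus_{d=0}^n\bigoplus_{\dim F=d}\mathring V(F)$ is $S_{n+1}$-equivariant.
   Context: $T^n\subset\mathbb R^{n+1}$ is the standard simplex $\{\lambda_i\ge0,\ \sum\lambda_i=1\}$. For $\pi\in S_{n+1}$ (permutations of $\{0,\dots,n\}$), $S_\pi(\lambda_0,\dots,\lambda_n)=(\lambda_{\pi(0)},\dots,\lambda_{\pi(n)})$, and $\pi$ acts on forms by pullback $S_\pi^*$. For a face $F$, $V(F)=\mathrm{tr}_{T^n,F}(V)$ (pullback to $F$), and $\mathring V(F)$ is the subspace of $V(F)$ with vanishing trace on $\partial F$. $V_d$ is the subspace of $V$ of forms whose traces vanish on all $(d-1)$-dimensional faces of $T^n$ ($V_0=V$, $V_{n+1}=0$). $\mathcal D$ is defined on $W_d$ by $\alpha\mapsto\bigoplus_{\dim F=d}\mathrm{tr}_{T^n,F}\alpha$ and extended linearly. The action of $S_{n+1}$ on $\bigoplus_{\dim F=d}\mathring V(F)$: if $F'=S_\pi(F)$, then pullback by $S_\pi|_F:F\to F'$ gives a map $S_\pi^*:\mathring V(F')\to\mathring V(F)$, and these maps together define the action of $\pi$ on the direct sum. *)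

theory Defs
  imports "HOL-Analysis.Analysis" "HOL-Combinatorics.Permutations"
begin

text \<open>Points of R^(n+1) are functions nat => real vanishing beyond n.
 A k-form on T^n is represented (in ambient coordinates) by a function
 w :: point => point list => real, where w x vs is the value at x of the form
 applied to the k tangent vectors vs; it is normalized to be 0 unless x is in T^n,
 vs has length k and all vs are tangent to T^n.\<close>

type_synonym pt = "nat \<Rightarrow> real"
type_synonym form = "pt \<Rightarrow> pt list \<Rightarrow> real"

definition std_simplex :: "nat \<Rightarrow> pt set" where
  "std_simplex n = {x. (\<forall>i\<le>n. 0 \<le> x i) \<and> (\<forall>i>n. x i = 0) \<and> (\<Sum>i\<le>n. x i) = 1}"

text \<open>Faces of T^n are indexed by their nonempty vertex sets s; dim = card s - 1.\<close>
definition is_face :: "nat \<Rightarrow> nat set \<Rightarrow> bool" where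
  "is_face n s \<longleftrightarrow> s \<subseteq> {0..n} \<and> s \<noteq> {}"

definition face :: "nat \<Rightarrow> nat set \<Rightarrow> pt set" where
  "face n s = {x \<in> std_simplex n. \<forall>i. i \<notin> s \<longrightarrow> x i = 0}"

definition tangent :: "nat set \<Rightarrow> pt set" where
  "tangent s = {v. (\<forall>i. i \<notin> s \<longrightarrow> v i = 0) \<and> (\<Sum>i\<in>s. v i) = 0}"

definition multilinear_alt :: "pt set \<Rightarrow> nat \<Rightarrow> (pt list \<Rightarrow> real) \<Rightarrow> bool" where
  "multilinear_alt U k f \<longleftrightarrow>
     (\<forall>vs j u w a b. length vs = k \<longrightarrow> set vs \<subseteq> U \<longrightarrow> j < k \<longrightarrow> u \<in> U \<longrightarrow> w \<in> U \<longrightarrow>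
        f (vs[j := (\<lambda>i. a * u i + b * w i)]) = a * f (vs[j := u]) + b * f (vs[j := w])) \<and>
     (\<forall>vs i j. length vs = k \<longrightarrow> set vs \<subseteq> U \<longrightarrow> i < k \<longrightarrow> j < k \<longrightarrow> i \<noteq> j \<longrightarrow>
        vs ! i = vs ! j \<longrightarrow> f vs = 0)"

text \<open>(Not necessarily smooth) k-forms on the face s of T^n, in normalized ambient representation.\<close>
definition forms_on :: "nat \<Rightarrow> nat set \<Rightarrow> nat \<Rightarrow> form set" where
  "forms_on n s k = {w. (\<forall>x vs. \<not> (x \<in> face n s \<and> length vs = k \<and> set vs \<subseteq> tangent s) \<longrightarrow> w x vs = 0)
      \<and> (\<forall>x \<in> face n s. multilinear_alt (tangent s) k (w x))}"

definition kforms :: "nat \<Rightarrow> nat \<Rightarrow> form set" where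
  "kforms n k = forms_on n {0..n} k"

definition trace :: "nat \<Rightarrow> nat set \<Rightarrow> form \<Rightarrow> form" where
  "trace n s w = (\<lambda>x vs. if x \<in> face n s \<and> set vs \<subseteq> tangent s then w x vs else 0)"

text \<open>S_pi(x) = (x_{pi 0}, ..., x_{pi n}) = x o pi; it is linear, so the pullback is\<close>
definition pull :: "(nat \<Rightarrow> nat) \<Rightarrow> form \<Rightarrow> form" where
  "pull p w = (\<lambda>x vs. w (x \<circ> p) (map (\<lambda>v. v \<circ> p) vs))"

definition fadd :: "form \<Rightarrow> form \<Rightarrow> form" where
  "fadd a b = (\<lambda>x vs. a x vs + b x vs)"
definition fscale :: "real \<Rightarrow> form \<Rightarrow> form" where
  "fscale c a = (\<lambda>x vs. c * a x vs)"
definition fzero :: form where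
  "fzero = (\<lambda>x vs. 0)"

definition fsubspace :: "form set \<Rightarrow> bool" where
  "fsubspace V \<longleftrightarrow> fzero \<in> V \<and> (\<forall>a\<in>V. \<forall>b\<in>V. fadd a b \<in> V) \<and> (\<forall>c. \<forall>a\<in>V. fscale c a \<in> V)"

definition fin_dim :: "form set \<Rightarrow> bool" where
  "fin_dim V \<longleftrightarrow> (\<exists>B. finite B \<and> B \<subseteq> V \<and>
      (\<forall>a\<in>V. \<exists>c. a = (\<lambda>x vs. \<Sum>b\<in>B. c b * b x vs)))"

definition sym_invariant :: "nat \<Rightarrow> form set \<Rightarrow> bool" where
  "sym_invariant n V \<longleftrightarrow> (\<forall>p. p permutes {0..n} \<longrightarrow> (\<forall>a\<in>V. pull p a \<in> V))"

text \<open>V_d: forms in V whose traces vanish on all (d-1)-dimensional faces\<close>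
definition Vsub :: "nat \<Rightarrow> form set \<Rightarrow> nat \<Rightarrow> form set" where
  "Vsub n V d = {a \<in> V. \<forall>s. is_face n s \<and> card s = d \<longrightarrow> trace n s a = fzero}"

definition direct_sum_eq :: "form set \<Rightarrow> form set \<Rightarrow> form set \<Rightarrow> bool" where
  "direct_sum_eq A B C \<longleftrightarrow> B \<subseteq> A \<and> C \<subseteq> A \<and> B \<inter> C = {fzero} \<and>
      (\<forall>a\<in>A. \<exists>b\<in>B. \<exists>c\<in>C. a = fadd b c)"

definition components :: "nat \<Rightarrow> (nat \<Rightarrow> form set) \<Rightarrow> form \<Rightarrow> nat \<Rightarrow> form" where
  "components n W a = (THE c. (\<forall>d\<le>n. c d \<in> W d) \<and> (\<forall>d>n. c d = fzero) \<and>
       a = (\<lambda>x vs. \<Sum>d\<le>n. c d x vs))"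

definition geom_decomp :: "nat \<Rightarrow> (nat \<Rightarrow> form set) \<Rightarrow> form \<Rightarrow> nat set \<Rightarrow> form" where
  "geom_decomp n W a s = trace n s (components n W a (card s - 1))"

text \<open>action of pi on the direct sum over faces: (pi . b)_F = S_pi^* b_{S_pi F},
  S_pi(face s) = face (inv pi ` s)\<close>
definition face_action :: "(nat \<Rightarrow> nat) \<Rightarrow> (nat set \<Rightarrow> form) \<Rightarrow> nat set \<Rightarrow> form" where
  "face_action p b s = pull p (b (inv p ` s))"

end

theory Submission
  imports Defs
begin

text \<open>Since \<open>V\<^sub>d = W\<^sub>d \<oplus> V\<^sub>d\<^sub>+\<^sub>1\<close> and \<open>V\<^sub>n\<^sub>+\<^sub>1 = 0\<close>, every \<open>a \<in> V\<close> has a unique decomposition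
  \<open>a = a\<^sub>0 + \<dots> + a\<^sub>n\<close> with \<open>a\<^sub>d \<in> W\<^sub>d\<close>. As every \<open>W\<^sub>d\<close> is invariant, pulling this decomposition back by
  \<open>S\<^sub>\<pi>\<close> gives the decomposition of \<open>S\<^sub>\<pi>\<^sup>* a\<close>, so taking components commutes with \<open>S\<^sub>\<pi>\<^sup>*\<close>. Finally,
  tracing \<open>S\<^sub>\<pi>\<^sup>* b\<close> onto a face \<open>F\<close> is the same as pulling back the trace of \<open>b\<close> onto \<open>S\<^sub>\<pi>(F)\<close>,
  a face of the same dimension.\<close>

definition fsum :: "('i \<Rightarrow> form) \<Rightarrow> 'i set \<Rightarrow> form" where
  "fsum c D = (\<lambda>x vs. \<Sum>d\<in>D. c d x vs)"

lemma fsum_empty [simp]: "fsum c {} = fzero"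
  by (simp add: fsum_def fzero_def)

lemma fsum_insert:
  "finite D \<Longrightarrow> d \<notin> D \<Longrightarrow> fsum c (insert d D) = fadd (c d) (fsum c D)"
  by (simp add: fsum_def fadd_def)

lemma fsum_atLeast_Suc_atMost:
  "j \<le> n \<Longrightarrow> fsum c {j..n} = fadd (c j) (fsum c {Suc j..n})"
  by (simp add: fsum_def fadd_def sum.atLeast_Suc_atMost)

lemma fsubspace_fsum:
  assumes "fsubspace U" "finite D" "\<And>d. d \<in> D \<Longrightarrow> c d \<in> U"
  shows "fsum c D \<in> U"
  using assms(2,3)
proof (induction D rule: finite_induct)
  case empty
  then show ?case using assms(1) by (simp add: fsubspace_def)
next
  case (insert d D)
  then show ?case using assms(1) by (simp add: fsum_insert fsubspace_def)
qed

lemma fsubspace_Vsub: "fsubspace V \<Longrightarrow> fsubspace (Vsub n V d)"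
  unfolding fsubspace_def Vsub_def
  by (auto simp: trace_def fadd_def fscale_def fzero_def fun_eq_iff)

lemma Vsub_0: "Vsub n V 0 = V"
  unfolding Vsub_def is_face_def
  by (auto dest: finite_subset[OF _ finite_atLeastAtMost])

lemma trace_whole_simplex: "a \<in> kforms n k \<Longrightarrow> trace n {0..n} a = a"
  unfolding kforms_def forms_on_def trace_def
  by (auto simp: fun_eq_iff)

lemma Vsub_Suc_top: "V \<subseteq> kforms n k \<Longrightarrow> Vsub n V (Suc n) \<subseteq> {fzero}"
  unfolding Vsub_def is_face_def
  by (auto dest!: spec[of _ "{0..n}"] simp: trace_whole_simplex subset_iff)

definition is_decomposition :: "nat \<Rightarrow> (nat \<Rightarrow> form set) \<Rightarrow> form \<Rightarrow> (nat \<Rightarrow> form) \<Rightarrow> bool" where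
  "is_decomposition n W a c \<longleftrightarrow>
     (\<forall>d\<le>n. c d \<in> W d) \<and> (\<forall>d>n. c d = fzero) \<and> a = fsum c {..n}"

lemma components_eq_The_decomposition:
  "components n W a = (THE c. is_decomposition n W a c)"
  by (simp add: components_def is_decomposition_def fsum_def)

lemma pull_decomposition:
  assumes "\<And>d. d \<le> n \<Longrightarrow> sym_invariant n (W d)" and "p permutes {0..n}"
    and "is_decomposition n W a c"
  shows "is_decomposition n W (pull p a) (\<lambda>d. pull p (c d))"
  using assms by (auto simp: is_decomposition_def sym_invariant_def pull_def fsum_def fzero_def)

locale filtration_splitting =
  fixes n :: nat and F W :: "nat \<Rightarrow> form set"
  assumes F_subspace: "\<And>d. fsubspace (F d)"
    and F_top: "F (Suc n) \<subseteq> {fzero}"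
    and W_subspace: "\<And>d. d \<le> n \<Longrightarrow> fsubspace (W d)"
    and F_split: "\<And>d. d \<le> n \<Longrightarrow> direct_sum_eq (F d) (W d) (F (Suc d))"
begin

lemma F_antimono: "d \<le> e \<Longrightarrow> e \<le> Suc n \<Longrightarrow> F e \<subseteq> F d"
proof (induction e rule: dec_induct)
  case (step e)
  then show ?case using F_split[of e] by (auto simp: direct_sum_eq_def)
qed simp

lemma W_subset_F: "d \<le> n \<Longrightarrow> W d \<subseteq> F d"
  using F_split by (simp add: direct_sum_eq_def)

lemma fsum_tail_in_F:
  assumes "\<And>d. d \<in> {j..n} \<Longrightarrow> c d \<in> W d"
  shows "fsum c {j..n} \<in> F j"
proof (rule fsubspace_fsum[OF F_subspace finite_atLeastAtMost])
  fix d assume "d \<in> {j..n}"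
  then show "c d \<in> F j"
    using assms W_subset_F[of d] F_antimono[of j d] by auto
qed

lemma fsum_eq_fzero_imp_fzero:
  assumes W: "\<And>d. d \<le> n \<Longrightarrow> c d \<in> W d" and sum: "fsum c {..n} = fzero"
  shows "d \<le> n \<Longrightarrow> c d = fzero"
proof (induction d rule: less_induct)
  case (less j)
  have "fsum c {..n} = fsum c {j..n}"
    unfolding fsum_def
    by (intro ext sum.mono_neutral_right) (use less in \<open>auto simp: fzero_def\<close>)
  then have "fadd (c j) (fsum c {Suc j..n}) = fzero"
    using sum less.prems by (simp add: fsum_atLeast_Suc_atMost)
  then have "c j = fscale (-1) (fsum c {Suc j..n})"
    by (simp add: fadd_def fscale_def fzero_def fun_eq_iff eq_neg_iff_add_eq_0)
  moreover have "fsum c {Suc j..n} \<in> F (Suc j)"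
    using W by (intro fsum_tail_in_F) auto
  ultimately have "c j \<in> F (Suc j)"
    using F_subspace by (simp add: fsubspace_def)
  moreover have "c j \<in> W j" using W less.prems .
  ultimately show ?case using F_split[OF less.prems] by (auto simp: direct_sum_eq_def)
qed

lemma decomposition_unique:
  assumes c: "is_decomposition n W a c" and c': "is_decomposition n W a c'"
  shows "c = c'"
proof
  fix d
  let ?e = "\<lambda>d. fadd (c d) (fscale (-1) (c' d))"
  have "?e d = fzero" if "d \<le> n"
  proof (rule fsum_eq_fzero_imp_fzero[OF _ _ that])
    show "?e d \<in> W d" if "d \<le> n" for d
      using c c' W_subspace[OF that] that by (simp add: is_decomposition_def fsubspace_def)
    have "fsum c {..n} = fsum c' {..n}" using c c' by (simp add: is_decomposition_def)
    then show "fsum ?e {..n} = fzero"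
      by (auto simp: fsum_def fadd_def fscale_def fzero_def fun_eq_iff sum_subtractf dest!: fun_cong)
  qed
  then show "c d = c' d"
    using c c' by (cases "d \<le> n") (auto simp: is_decomposition_def fadd_def fscale_def fzero_def fun_eq_iff)
qed

lemma decomposition_exists_from:
  assumes "j \<le> Suc n" and "a \<in> F j"
  shows "\<exists>c. (\<forall>d\<in>{j..n}. c d \<in> W d) \<and> a = fsum c {j..n}"
  using assms
proof (induction j arbitrary: a rule: inc_induct)
  case base
  then show ?case using F_top by auto
next
  case (step j)
  then obtain b r where b: "b \<in> W j" and r: "r \<in> F (Suc j)" and a: "a = fadd b r"
    using F_split[of j] by (auto simp: direct_sum_eq_def)
  obtain c where c: "\<forall>d\<in>{Suc j..n}. c d \<in> W d" and r_eq: "r = fsum c {Suc j..n}"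
    using step.IH r by blast
  have "fsum (c(j := b)) {Suc j..n} = fsum c {Suc j..n}"
    unfolding fsum_def by (intro ext sum.cong) auto
  then have "a = fsum (c(j := b)) {j..n}"
    using step.hyps a r_eq by (simp add: fsum_atLeast_Suc_atMost)
  moreover have "\<forall>d\<in>{j..n}. (c(j := b)) d \<in> W d"
    using b c by auto
  ultimately show ?case by blast
qed

lemma decomposition_exists:
  assumes "a \<in> F 0"
  shows "\<exists>c. is_decomposition n W a c"
proof -
  obtain c where c: "\<forall>d\<in>{0..n}. c d \<in> W d" and a: "a = fsum c {0..n}"
    using decomposition_exists_from[OF _ assms] by blast
  have "fsum (\<lambda>d. if d \<le> n then c d else fzero) {..n} = fsum c {0..n}"
    unfolding fsum_def by (intro ext sum.cong) auto
  then have "is_decomposition n W a (\<lambda>d. if d \<le> n then c d else fzero)"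
    using c a by (auto simp: is_decomposition_def)
  then show ?thesis by blast
qed

lemma components_eq:
  "is_decomposition n W a c \<Longrightarrow> components n W a = c"
  unfolding components_eq_The_decomposition
  using decomposition_unique by blast

lemma components_is_decomposition:
  "a \<in> F 0 \<Longrightarrow> is_decomposition n W a (components n W a)"
  using decomposition_exists components_eq by blast

lemma components_pull:
  assumes "\<And>d. d \<le> n \<Longrightarrow> sym_invariant n (W d)" and "p permutes {0..n}" and "a \<in> F 0"
  shows "components n W (pull p a) d = pull p (components n W a d)"
  using components_eq[OF pull_decomposition[OF assms(1,2) components_is_decomposition[OF assms(3)]]]
  by simp

end

lemma comp_permutes_in_std_simplex:
  assumes p: "p permutes {0..n}"
  shows "x \<circ> p \<in> std_simplex n \<longleftrightarrow> x \<in> std_simplex n"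
proof -
  have fixed: "i > n \<Longrightarrow> p i = i" for i using p by (auto simp: permutes_def)
  have bij: "bij_betw p {..n} {..n}"
    using permutes_imp_bij[OF p] by (simp add: atLeast0AtMost)
  have "(\<Sum>i\<le>n. x (p i)) = (\<Sum>i\<le>n. x i)"
    using sum.reindex_bij_betw[OF bij, of x] by simp
  moreover have "(\<forall>i\<le>n. 0 \<le> x (p i)) \<longleftrightarrow> (\<forall>i\<le>n. 0 \<le> x i)"
    using bij by (metis bij_betw_iff_bijections atMost_iff)
  ultimately show ?thesis unfolding std_simplex_def using fixed by auto
qed

lemma trace_pull:
  assumes p: "p permutes {0..n}"
  shows "trace n s (pull p b) = pull p (trace n (inv p ` s) b)"
proof -
  have bij: "bij p" using permutes_bij[OF p] .
  then have preimage: "inv p ` s = p -` s" by (simp add: bij_vimage_eq_inv_image)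
  have vanish: "(\<forall>i. i \<notin> p -` s \<longrightarrow> v (p i) = 0) \<longleftrightarrow> (\<forall>j. j \<notin> s \<longrightarrow> v j = 0)" for v :: pt
    using bij by (metis bij_pointE vimage_eq)
  have "inj_on p (p -` s)" using bij_is_inj[OF bij] by (rule inj_on_subset) simp
  then have "(\<Sum>i\<in>p -` s. v (p i)) = (\<Sum>j\<in>s. v j)" for v :: pt
    using sum.reindex[of p "p -` s" v] bij by (simp add: bij_is_surj surj_image_vimage_eq)
  then have "x \<circ> p \<in> face n (inv p ` s) \<longleftrightarrow> x \<in> face n s"
    and "v \<circ> p \<in> tangent (inv p ` s) \<longleftrightarrow> v \<in> tangent s" for x v
    unfolding face_def tangent_def preimage
    using comp_permutes_in_std_simplex[OF p, of x] vanish[of x] vanish[of v] by auto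
  then show ?thesis unfolding trace_def pull_def by (auto simp: fun_eq_iff)
qed

theorem proposition3p13:
  fixes n k :: nat and V :: "form set" and W :: "nat \<Rightarrow> form set"
  assumes "V \<subseteq> kforms n k" and "fsubspace V" and "fin_dim V" and "sym_invariant n V"
    and "\<And>d. d \<le> n \<Longrightarrow> fsubspace (W d) \<and> sym_invariant n (W d)"
    and "\<And>d. d \<le> n \<Longrightarrow> direct_sum_eq (Vsub n V d) (W d) (Vsub n V (Suc d))"
  shows "\<forall>p. p permutes {0..n} \<longrightarrow> (\<forall>a\<in>V. \<forall>s. is_face n s \<longrightarrow>
           geom_decomp n W (pull p a) s = face_action p (geom_decomp n W a) s)"
proof (intro allI impI ballI)
  fix p a s assume p: "p permutes {0..n}" and a: "a \<in> V"
  interpret filtration_splitting n "Vsub n V" W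
    using assms fsubspace_Vsub Vsub_Suc_top by unfold_locales auto
  have "inj (inv p)" using permutes_inv[OF p] permutes_inj by blast
  then have card: "card (inv p ` s) = card s" by (simp add: card_image inj_on_subset)
  show "geom_decomp n W (pull p a) s = face_action p (geom_decomp n W a) s"
    unfolding geom_decomp_def face_action_def card
    using components_pull[OF _ p] assms(5) a by (simp add: Vsub_0 trace_pull[OF p])
qed

end
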